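(* Suppose $N$ carries a $B$-grading and a $B'$-grading such that the $B'$-grading refines the $B$-grading, and suppose $M$ is a $B$-graded submodule of $N$, i.e. $M=\bigoplus_{b\in B}(M\cap N_b)$. Then every element of every reduced Macaulay basis of $M$ with respect to the $B'$-grading is $B$-homogeneous.
   Context: Standing setup. $\mathbf{k}$ is a field. $(A,+,0)$ is a finitely generated cancellative commutative monoid with a well-ordered total order such that $0<a$ for $a\ne0$ and $a\le a'\Rightarrow a+c\le a'+c$. $R=\bigoplus_{a\in A}R_a$ is a commutative Noetherian $\mathbf{k}$-algebra with $R_aR_{a'}\subseteq R_{a+a'}$. $B$ and $B'$ are well-ordered totally ordered sets, each with an action $(a,b)\mapsto a\cdot b$ of $A$ satisfying $0\cdot b=b$, $(a+a')\cdot b=a\cdot(a'\cdot b)$, monotone and cancellative in each argument. $N$ is a Noetherian $R$-module with gradings $N=\bigoplus_{b\in B}N_b=\bigoplus_{b'\in B'}N'_{b'}$, $R_aN_b\subseteq N_{a\cdot b}$, $R_aN'_{b'}\subseteq N'_{a\cdot b'}$; $M\subseteq N$ an $R$-submodule. The $B'$-grading refines the $B$-grading if there is an order-preserving map $g:B'\to B$ with $g(a\cdot b')=a\cdot g(b')$ and $N_b=\bigoplus_{b'\in g^{-1}(b)}N'_{b'}$ for all $b$. For a nonzero $m$, $\deg m$, $\operatorname{lf}(m)$ (w.r.t. a chosen grading) are the largest degree of a nonzero homogeneous component and that component. A finite set $X$ of nonzero elements of $M$ is a Macaulay basis of $M$ w.r.t. a grading if the $R$-submodule generated by $\{\operatorname{lf}(p):0\ne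 p\in M\}$ equals that generated by $\{\operatorname{lf}(x):x\in X\}$. Reduction (w.r.t. the $B'$-grading): $W_{b'}(X)=\operatorname{span}_{\mathbf{k}}\{r\operatorname{lf}(x): x\in X,\ r\in R\text{ homogeneous},\ r\operatorname{lf}(x)\in N'_{b'}\}$; $m\to_X m'$ iff $\{b': m_{b'}\ne0,\ m_{b'}\in W_{b'}(X)\}$ is nonempty with maximum $b'$ and $m'=m-\sum_jr_jx_j$ with $x_j\in X$, $r_j$ homogeneous, $r_j\operatorname{lf}(x_j)\in N'_{b'}$, $m_{b'}=\sum_jr_j\operatorname{lf}(x_j)$. A reduced Macaulay basis is a Macaulay basis $X$ such that for each $x\in X$ there is no $m'$ with $x\to_{X\setminus\{x\}}m'$. *)

theory Defs
  imports Main
begin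

definition direct_sum_decomp :: "('i \<Rightarrow> 'x::ab_group_add set) \<Rightarrow> bool" where
  "direct_sum_decomp D \<longleftrightarrow>
     (\<forall>i. 0 \<in> D i \<and> (\<forall>x\<in>D i. \<forall>y\<in>D i. x + y \<in> D i \<and> - x \<in> D i)) \<and>
     (\<forall>x. \<exists>!f. finite {i. f i \<noteq> 0} \<and> (\<forall>i. f i \<in> D i) \<and> sum f {i. f i \<noteq> 0} = x)"

definition comp :: "('i \<Rightarrow> 'x::ab_group_add set) \<Rightarrow> 'i \<Rightarrow> 'x \<Rightarrow> 'x" where
  "comp D i x = (THE f. finite {j. f j \<noteq> 0} \<and> (\<forall>j. f j \<in> D j) \<and> sum f {j. f j \<noteq> 0} = x) i"

definition gdeg :: "('i::linorder \<Rightarrow> 'x::ab_group_add set) \<Rightarrow> 'x \<Rightarrow> 'i" where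
  "gdeg D x = Max {i. comp D i x \<noteq> 0}"

definition lf :: "('i::linorder \<Rightarrow> 'x::ab_group_add set) \<Rightarrow> 'x \<Rightarrow> 'x" where
  "lf D x = comp D (gdeg D x) x"

definition homogeneous :: "('i \<Rightarrow> 'x set) \<Rightarrow> 'x \<Rightarrow> bool" where
  "homogeneous D x \<longleftrightarrow> (\<exists>i. x \<in> D i)"

definition fin_gen_monoid :: "'a::comm_monoid_add itself \<Rightarrow> bool" where
  "fin_gen_monoid _ \<longleftrightarrow> (\<exists>G::'a set. finite G \<and> (\<forall>a. \<exists>xs. set xs \<subseteq> G \<and> a = sum_list xs))"

definition graded_monoid_ok :: "'a::{comm_monoid_add,wellorder} itself \<Rightarrow> bool" where
  "graded_monoid_ok T \<longleftrightarrow> fin_gen_monoid T \<and>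
     (\<forall>a b c::'a. a + c = b + c \<longrightarrow> a = b) \<and>
     (\<forall>a::'a. a \<noteq> 0 \<longrightarrow> 0 < a) \<and>
     (\<forall>a a' c::'a. a \<le> a' \<longrightarrow> a + c \<le> a' + c)"

definition monoid_action :: "('a::{comm_monoid_add,wellorder} \<Rightarrow> 'b::wellorder \<Rightarrow> 'b) \<Rightarrow> bool" where
  "monoid_action act \<longleftrightarrow>
     (\<forall>b. act 0 b = b) \<and>
     (\<forall>a a' b. act (a + a') b = act a (act a' b)) \<and>
     (\<forall>a a' b. a \<le> a' \<longrightarrow> act a b \<le> act a' b) \<and>
     (\<forall>a b b'. b \<le> b' \<longrightarrow> act a b \<le> act a b') \<and>
     (\<forall>a a' b. act a b = act a' b \<longrightarrow> a = a') \<and>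
     (\<forall>a b b'. act a b = act a b' \<longrightarrow> b = b')"

text \<open>A k-algebra structure on a commutative ring: a ring homomorphism from the field k.\<close>
definition alg_hom :: "('k::field \<Rightarrow> 'r::comm_ring_1) \<Rightarrow> bool" where
  "alg_hom \<phi> \<longleftrightarrow> \<phi> 1 = 1 \<and> (\<forall>x y. \<phi> (x + y) = \<phi> x + \<phi> y) \<and> (\<forall>x y. \<phi> (x * y) = \<phi> x * \<phi> y)"

definition is_ideal :: "'r::comm_ring_1 set \<Rightarrow> bool" where
  "is_ideal I \<longleftrightarrow> 0 \<in> I \<and> (\<forall>x\<in>I. \<forall>y\<in>I. x + y \<in> I) \<and> (\<forall>r. \<forall>x\<in>I. r * x \<in> I)"

definition gen_ideal :: "'r::comm_ring_1 set \<Rightarrow> 'r set" where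
  "gen_ideal S = \<Inter>{I. is_ideal I \<and> S \<subseteq> I}"

definition noetherian_ring :: "'r::comm_ring_1 itself \<Rightarrow> bool" where
  "noetherian_ring _ \<longleftrightarrow> (\<forall>I::'r set. is_ideal I \<longrightarrow> (\<exists>F. finite F \<and> F \<subseteq> I \<and> I = gen_ideal F))"

definition is_module :: "('r::comm_ring_1 \<Rightarrow> 'n::ab_group_add \<Rightarrow> 'n) \<Rightarrow> bool" where
  "is_module sm \<longleftrightarrow> (\<forall>r x y. sm r (x + y) = sm r x + sm r y) \<and>
     (\<forall>r s x. sm (r + s) x = sm r x + sm s x) \<and>
     (\<forall>r s x. sm (r * s) x = sm r (sm s x)) \<and> (\<forall>x. sm 1 x = x)"

definition is_submodule :: "('r::comm_ring_1 \<Rightarrow> 'n::ab_group_add \<Rightarrow> 'n) \<Rightarrow> 'n set \<Rightarrow> bool" where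
  "is_submodule sm S \<longleftrightarrow> 0 \<in> S \<and> (\<forall>x\<in>S. \<forall>y\<in>S. x + y \<in> S) \<and> (\<forall>r. \<forall>x\<in>S. sm r x \<in> S)"

definition gen_submodule :: "('r::comm_ring_1 \<Rightarrow> 'n::ab_group_add \<Rightarrow> 'n) \<Rightarrow> 'n set \<Rightarrow> 'n set" where
  "gen_submodule sm S = \<Inter>{T. is_submodule sm T \<and> S \<subseteq> T}"

definition noetherian_module :: "('r::comm_ring_1 \<Rightarrow> 'n::ab_group_add \<Rightarrow> 'n) \<Rightarrow> bool" where
  "noetherian_module sm \<longleftrightarrow>
     (\<forall>T. is_submodule sm T \<longrightarrow> (\<exists>F. finite F \<and> F \<subseteq> T \<and> T = gen_submodule sm F))"

definition graded_algebra ::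
  "('k::field \<Rightarrow> 'r::comm_ring_1) \<Rightarrow> ('a::comm_monoid_add \<Rightarrow> 'r set) \<Rightarrow> bool" where
  "graded_algebra \<phi> Rg \<longleftrightarrow> direct_sum_decomp Rg \<and>
     (\<forall>a c r. r \<in> Rg a \<longrightarrow> \<phi> c * r \<in> Rg a) \<and>
     (\<forall>a a' r s. r \<in> Rg a \<longrightarrow> s \<in> Rg a' \<longrightarrow> r * s \<in> Rg (a + a'))"

definition graded_module ::
  "('k::field \<Rightarrow> 'r::comm_ring_1) \<Rightarrow> ('a \<Rightarrow> 'r set) \<Rightarrow> ('r \<Rightarrow> 'n::ab_group_add \<Rightarrow> 'n)
     \<Rightarrow> ('a \<Rightarrow> 'b \<Rightarrow> 'b) \<Rightarrow> ('b \<Rightarrow> 'n set) \<Rightarrow> bool" where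
  "graded_module \<phi> Rg sm act Ng \<longleftrightarrow> direct_sum_decomp Ng \<and>
     (\<forall>b c x. x \<in> Ng b \<longrightarrow> sm (\<phi> c) x \<in> Ng b) \<and>
     (\<forall>a b r x. r \<in> Rg a \<longrightarrow> x \<in> Ng b \<longrightarrow> sm r x \<in> Ng (act a b))"

definition refines ::
  "('a \<Rightarrow> 'b::order \<Rightarrow> 'b) \<Rightarrow> ('a \<Rightarrow> 'c::order \<Rightarrow> 'c) \<Rightarrow> ('b \<Rightarrow> 'n::ab_group_add set)
     \<Rightarrow> ('c \<Rightarrow> 'n set) \<Rightarrow> bool" where
  "refines act act' Ng Ng' \<longleftrightarrow> (\<exists>g :: 'c \<Rightarrow> 'b. mono g \<and>
     (\<forall>a c. g (act' a c) = act a (g c)) \<and>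
     (\<forall>b. Ng b = {x. \<exists>S f. finite S \<and> S \<subseteq> g -` {b} \<and> (\<forall>c\<in>S. f c \<in> Ng' c) \<and> x = sum f S}))"

definition graded_submodule :: "('b \<Rightarrow> 'n::ab_group_add set) \<Rightarrow> 'n set \<Rightarrow> bool" where
  "graded_submodule Ng M \<longleftrightarrow>
     (\<forall>m\<in>M. \<exists>S f. finite S \<and> (\<forall>b\<in>S. f b \<in> M \<inter> Ng b) \<and> m = sum f S)"

definition macaulay_basis ::
  "('r::comm_ring_1 \<Rightarrow> 'n::ab_group_add \<Rightarrow> 'n) \<Rightarrow> ('c::linorder \<Rightarrow> 'n set) \<Rightarrow> 'n set \<Rightarrow> 'n set \<Rightarrow> bool" where
  "macaulay_basis sm Ng' M X \<longleftrightarrow> finite X \<and> X \<subseteq> M - {0} \<and>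
     gen_submodule sm {lf Ng' p | p. p \<in> M \<and> p \<noteq> 0} = gen_submodule sm (lf Ng' ` X)"

definition kspan :: "('k::field \<Rightarrow> 'r::comm_ring_1) \<Rightarrow> ('r \<Rightarrow> 'n::ab_group_add \<Rightarrow> 'n) \<Rightarrow> 'n set \<Rightarrow> 'n set" where
  "kspan \<phi> sm S = {v. \<exists>F c. finite F \<and> F \<subseteq> S \<and> v = (\<Sum>w\<in>F. sm (\<phi> (c w)) w)}"

definition Wset ::
  "('k::field \<Rightarrow> 'r::comm_ring_1) \<Rightarrow> ('a \<Rightarrow> 'r set) \<Rightarrow> ('r \<Rightarrow> 'n::ab_group_add \<Rightarrow> 'n)
     \<Rightarrow> ('c::linorder \<Rightarrow> 'n set) \<Rightarrow> 'n set \<Rightarrow> 'c \<Rightarrow> 'n set" where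
  "Wset \<phi> Rg sm Ng' X c = kspan \<phi> sm
     {sm r (lf Ng' x) | r x. x \<in> X \<and> homogeneous Rg r \<and> sm r (lf Ng' x) \<in> Ng' c}"

definition reduces ::
  "('k::field \<Rightarrow> 'r::comm_ring_1) \<Rightarrow> ('a \<Rightarrow> 'r set) \<Rightarrow> ('r \<Rightarrow> 'n::ab_group_add \<Rightarrow> 'n)
     \<Rightarrow> ('c::linorder \<Rightarrow> 'n set) \<Rightarrow> 'n set \<Rightarrow> 'n \<Rightarrow> 'n \<Rightarrow> bool" where
  "reduces \<phi> Rg sm Ng' X m m' \<longleftrightarrow>
     (let D = {c. comp Ng' c m \<noteq> 0 \<and> comp Ng' c m \<in> Wset \<phi> Rg sm Ng' X c} in
      \<exists>c. c \<in> D \<and> (\<forall>d\<in>D. d \<le> c) \<and>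
        (\<exists>ps :: ('r \<times> 'n) list.
           (\<forall>(r, x) \<in> set ps. x \<in> X \<and> homogeneous Rg r \<and> sm r (lf Ng' x) \<in> Ng' c) \<and>
           comp Ng' c m = sum_list (map (\<lambda>(r, x). sm r (lf Ng' x)) ps) \<and>
           m' = m - sum_list (map (\<lambda>(r, x). sm r x) ps)))"

definition reduced_macaulay_basis ::
  "('k::field \<Rightarrow> 'r::comm_ring_1) \<Rightarrow> ('a \<Rightarrow> 'r set) \<Rightarrow> ('r \<Rightarrow> 'n::ab_group_add \<Rightarrow> 'n)
     \<Rightarrow> ('c::linorder \<Rightarrow> 'n set) \<Rightarrow> 'n set \<Rightarrow> 'n set \<Rightarrow> bool" where
  "reduced_macaulay_basis \<phi> Rg sm Ng' M X \<longleftrightarrow> macaulay_basis sm Ng' M X \<and>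
     (\<forall>x\<in>X. \<not> (\<exists>m'. reduces \<phi> Rg sm Ng' (X - {x}) x m'))"

end

theory Submission
  imports Defs
begin

text \<open>Let g be the map from B' to B witnessing the refinement and suppose some x in X is not
  B-homogeneous. Some B-component p of x has B-degree smaller than g (deg' x); since M is graded,
  p lies in M, and its B'-leading form is a B'-component of x. As X is a Macaulay basis, lf' p
  lies in the submodule generated by the leading forms of X. The elements whose B'-components
  in all degrees c with g c < g (deg' x) lie in W(X - {x}) form a submodule containing all these
  leading forms (lf' x has no component there). Hence the component of x in degree deg' p lies
  in W(X - {x}), so x reduces modulo X - {x}, contradicting reducedness.\<close>

lemma direct_sum_decomp_ex1:
  "direct_sum_decomp D \<Longrightarrow> \<exists>!f. finite {j. f j \<noteq> 0} \<and> (\<forall>j. f j \<in> D j) \<and> sum f {j. f j \<noteq> 0} = x"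
  unfolding direct_sum_decomp_def by blast

lemma direct_sum_decomp_zero: "direct_sum_decomp D \<Longrightarrow> 0 \<in> D i"
  unfolding direct_sum_decomp_def by blast

lemma direct_sum_decomp_add: "direct_sum_decomp D \<Longrightarrow> x \<in> D i \<Longrightarrow> y \<in> D i \<Longrightarrow> x + y \<in> D i"
  unfolding direct_sum_decomp_def by blast

lemma comp_unique:
  assumes "direct_sum_decomp D" "finite {j. f j \<noteq> 0}" "\<forall>j. f j \<in> D j" "sum f {j. f j \<noteq> 0} = x"
  shows "comp D i x = f i"
  unfolding comp_def
  by (subst the1_equality[OF direct_sum_decomp_ex1[OF assms(1)]]) (use assms in auto)

lemma
  assumes "direct_sum_decomp D"
  shows finite_comp_support: "finite {i. comp D i x \<noteq> 0}"
    and comp_in: "comp D i x \<in> D i"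
    and sum_comp: "(\<Sum>i\<in>{i. comp D i x \<noteq> 0}. comp D i x) = x"
proof -
  let ?P = "\<lambda>f. finite {j. f j \<noteq> 0} \<and> (\<forall>j. f j \<in> D j) \<and> sum f {j. f j \<noteq> 0} = x"
  have "?P (\<lambda>i. comp D i x)"
    unfolding comp_def by (rule theI'[OF direct_sum_decomp_ex1[OF assms]])
  then show "finite {i. comp D i x \<noteq> 0}" "comp D i x \<in> D i"
    "(\<Sum>i\<in>{i. comp D i x \<noteq> 0}. comp D i x) = x" by blast+
qed

lemma comp_homogeneous:
  assumes "direct_sum_decomp D" "y \<in> D d"
  shows "comp D c y = (if c = d then y else 0)"
proof (rule comp_unique[OF assms(1)])
  show "finite {j. (if j = d then y else 0) \<noteq> 0}"
    by (rule finite_subset[of _ "{d}"]) auto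
  show "\<forall>j. (if j = d then y else 0) \<in> D j"
    using assms by (simp add: direct_sum_decomp_zero)
  show "(\<Sum>j\<in>{j. (if j = d then y else 0) \<noteq> 0}. if j = d then y else 0) = y"
    by (cases "y = 0") (simp_all add: Collect_conv_if)
qed

lemma comp_zero: "direct_sum_decomp D \<Longrightarrow> comp D c 0 = 0"
  using comp_homogeneous[of D 0 c c] by (simp add: direct_sum_decomp_zero)

lemma comp_add:
  assumes ds: "direct_sum_decomp D"
  shows "comp D c (x + y) = comp D c x + comp D c y"
proof (rule comp_unique[OF ds])
  let ?f = "\<lambda>i. comp D i x + comp D i y"
  let ?S = "{i. comp D i x \<noteq> 0} \<union> {i. comp D i y \<noteq> 0}"
  have fin: "finite ?S" and sub: "{j. ?f j \<noteq> 0} \<subseteq> ?S"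
    using finite_comp_support[OF ds] by auto
  then show "finite {j. ?f j \<noteq> 0}" by (rule finite_subset[rotated])
  show "\<forall>j. ?f j \<in> D j" by (simp add: ds comp_in direct_sum_decomp_add)
  have "sum ?f {j. ?f j \<noteq> 0} = sum ?f ?S"
    by (rule sum.mono_neutral_left) (use fin sub in auto)
  also have "\<dots> = (\<Sum>i\<in>?S. comp D i x) + (\<Sum>i\<in>?S. comp D i y)"
    by (rule sum.distrib)
  also have "(\<Sum>i\<in>?S. comp D i x) = x"
    by (subst sum.mono_neutral_right[OF fin, of "{i. comp D i x \<noteq> 0}"]) (auto simp: sum_comp ds)
  also have "(\<Sum>i\<in>?S. comp D i y) = y"
    by (subst sum.mono_neutral_right[OF fin, of "{i. comp D i y \<noteq> 0}"]) (auto simp: sum_comp ds)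
  finally show "sum ?f {j. ?f j \<noteq> 0} = x + y" .
qed

lemma comp_sum:
  assumes "direct_sum_decomp D"
  shows "comp D c (sum h I) = (\<Sum>i\<in>I. comp D c (h i))"
  by (induction I rule: infinite_finite_induct) (simp_all add: assms comp_zero comp_add)

lemma in_direct_sum_decomp_if_support_subset:
  assumes ds: "direct_sum_decomp D" and sub: "{i. comp D i x \<noteq> 0} \<subseteq> {d}"
  shows "x \<in> D d"
proof -
  have "x = (\<Sum>i\<in>{i. comp D i x \<noteq> 0}. comp D i x)" by (simp add: sum_comp ds)
  also have "\<dots> = (\<Sum>i\<in>{d}. comp D i x)"
    by (rule sum.mono_neutral_left) (use sub in auto)
  finally show ?thesis using comp_in[OF ds, of d x] by simp
qed

lemma
  assumes ds: "direct_sum_decomp (D :: 'i::linorder \<Rightarrow> 'x::ab_group_add set)" and "x \<noteq> 0"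
  shows lf_nonzero: "lf D x \<noteq> 0"
    and comp_le_gdeg: "comp D i x \<noteq> 0 \<Longrightarrow> i \<le> gdeg D x"
proof -
  have "{i. comp D i x \<noteq> 0} \<noteq> {}"
    using sum_comp[OF ds, of x] \<open>x \<noteq> 0\<close> by force
  then show "lf D x \<noteq> 0"
    unfolding lf_def gdeg_def using Max_in[OF finite_comp_support[OF ds]] by simp
  show "comp D i x \<noteq> 0 \<Longrightarrow> i \<le> gdeg D x"
    unfolding gdeg_def using Max_ge[OF finite_comp_support[OF ds]] by simp
qed

lemma lf_in: "direct_sum_decomp D \<Longrightarrow> lf D x \<in> D (gdeg D x)"
  unfolding lf_def by (rule comp_in)

lemma comp_in_graded_submodule:
  assumes ds: "direct_sum_decomp D" and gs: "graded_submodule D M" and "0 \<in> M" "m \<in> M"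
  shows "comp D b m \<in> M"
proof -
  obtain S f where S: "finite S" "\<forall>b\<in>S. f b \<in> M \<inter> D b" "m = sum f S"
    using gs \<open>m \<in> M\<close> unfolding graded_submodule_def by blast
  have "comp D b m = (\<Sum>b'\<in>S. if b = b' then f b' else 0)"
    unfolding S(3) comp_sum[OF ds]
    by (rule sum.cong[OF refl]) (use S(2) comp_homogeneous[OF ds] in blast)
  also have "\<dots> = (if b \<in> S then f b else 0)"
    using sum.delta[OF S(1), of b f] by (simp add: eq_commute)
  finally show ?thesis using S(2) \<open>0 \<in> M\<close> by auto
qed

lemma act_increasing:
  assumes "graded_monoid_ok TYPE('a::{comm_monoid_add,wellorder})"
    and "monoid_action (act :: 'a \<Rightarrow> 'b::wellorder \<Rightarrow> 'b)"
  shows "b \<le> act a b"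
proof -
  have "0 \<le> a"
    using assms(1) unfolding graded_monoid_ok_def by (cases "a = 0") (auto intro: less_imp_le)
  then have "act 0 b \<le> act a b" using assms(2) unfolding monoid_action_def by blast
  then show ?thesis using assms(2) unfolding monoid_action_def by simp
qed

lemma refining_map_less_if_act_less:
  assumes "graded_monoid_ok TYPE('a::{comm_monoid_add,wellorder})"
    and "monoid_action (act :: 'a \<Rightarrow> 'b::wellorder \<Rightarrow> 'b)"
    and "g (act' a c) = act a (g c)" and "g (act' a c) < \<beta>"
  shows "g c < \<beta>"
  using act_increasing[OF assms(1,2), of "g c" a] assms(3,4) by simp

context
  fixes Ng :: "'b::linorder \<Rightarrow> 'n::ab_group_add set" and Ng' :: "'c::linorder \<Rightarrow> 'n set" and g :: "'c \<Rightarrow> 'b"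
  assumes ds: "direct_sum_decomp Ng" and ds': "direct_sum_decomp Ng'"
    and refined: "\<And>b. Ng b =
      {x. \<exists>S f. finite S \<and> S \<subseteq> g -` {b} \<and> (\<forall>c\<in>S. f c \<in> Ng' c) \<and> x = sum f S}"
begin

lemma comp_refined_eq_0: "y \<in> Ng b \<Longrightarrow> g c \<noteq> b \<Longrightarrow> comp Ng' c y = 0"
proof -
  assume "y \<in> Ng b" "g c \<noteq> b"
  then obtain S f where S: "S \<subseteq> g -` {b}" "\<forall>c\<in>S. f c \<in> Ng' c" "y = sum f S"
    unfolding refined[of b] by blast
  have "comp Ng' c y = (\<Sum>c'\<in>S. comp Ng' c (f c'))" using S(3) comp_sum[OF ds'] by simp
  also have "\<dots> = 0"
  proof (intro sum.neutral ballI)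
    fix c' assume "c' \<in> S"
    then have "f c' \<in> Ng' c'" "c' \<noteq> c" using S(1,2) \<open>g c \<noteq> b\<close> by auto
    then show "comp Ng' c (f c') = 0" by (simp add: comp_homogeneous[OF ds'])
  qed
  finally show ?thesis .
qed

lemma comp_refined_comp: "comp Ng' c (comp Ng b x) = (if g c = b then comp Ng' c x else 0)"
proof (cases "g c = b")
  case True
  let ?S = "{b. comp Ng b x \<noteq> 0}"
  have "comp Ng' c x = (\<Sum>b\<in>?S. comp Ng' c (comp Ng b x))"
    by (subst sum_comp[OF ds, of x, symmetric]) (rule comp_sum[OF ds'])
  also have "\<dots> = (\<Sum>b\<in>?S. if b = g c then comp Ng' c (comp Ng b x) else 0)"
    by (rule sum.cong[OF refl]) (simp add: comp_refined_eq_0[OF comp_in[OF ds]])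
  also have "\<dots> = comp Ng' c (comp Ng (g c) x)"
    by (simp add: sum.delta[OF finite_comp_support[OF ds]] comp_zero[OF ds'])
  finally show ?thesis using True by simp
next
  case False
  then show ?thesis by (simp add: comp_refined_eq_0[OF comp_in[OF ds]])
qed

lemma nonhomogeneous_lower_component:
  assumes "mono g" and "\<not> homogeneous Ng x"
  obtains b where "comp Ng b x \<noteq> 0"
    and "g (gdeg Ng' (comp Ng b x)) < g (gdeg Ng' x)"
    and "comp Ng' (gdeg Ng' (comp Ng b x)) x = lf Ng' (comp Ng b x)"
proof -
  define b0 where "b0 = g (gdeg Ng' x)"
  have x0: "x \<noteq> 0"
    using assms(2) direct_sum_decomp_zero[OF ds] unfolding homogeneous_def by blast
  have "\<not> {b. comp Ng b x \<noteq> 0} \<subseteq> {b0}"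
    using assms(2) in_direct_sum_decomp_if_support_subset[OF ds] unfolding homogeneous_def by blast
  then obtain b where b: "b \<noteq> b0" "comp Ng b x \<noteq> 0" by blast
  define p where "p = comp Ng b x"
  define c1 where "c1 = gdeg Ng' p"
  have lfp: "comp Ng' c1 p = lf Ng' p" unfolding c1_def lf_def ..
  have lfp0: "lf Ng' p \<noteq> 0" using lf_nonzero[OF ds'] b(2) unfolding p_def .
  have "comp Ng' c1 p = (if g c1 = b then comp Ng' c1 x else 0)"
    unfolding p_def by (rule comp_refined_comp)
  then have gc1: "g c1 = b" and xc1: "comp Ng' c1 x = lf Ng' p"
    using lfp lfp0 by (simp_all split: if_splits)
  have "c1 \<le> gdeg Ng' x" using comp_le_gdeg[OF ds' x0] xc1 lfp0 by simp
  then have "b \<le> b0" using monoD[OF assms(1)] gc1 unfolding b0_def by blast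
  then have "b < b0" using b(1) by simp
  show ?thesis
  proof (rule that)
    show "comp Ng b x \<noteq> 0" by (fact b(2))
    show "g (gdeg Ng' (comp Ng b x)) < g (gdeg Ng' x)"
      using \<open>b < b0\<close> gc1 by (simp add: b0_def c1_def p_def)
    show "comp Ng' (gdeg Ng' (comp Ng b x)) x = lf Ng' (comp Ng b x)"
      using xc1 by (simp add: c1_def p_def)
  qed
qed

end

locale graded_reduction =
  fixes \<phi> :: "'k::field \<Rightarrow> 'r::comm_ring_1"
    and Rg :: "'a::{comm_monoid_add,wellorder} \<Rightarrow> 'r set"
    and sm :: "'r \<Rightarrow> 'n::ab_group_add \<Rightarrow> 'n"
    and act' :: "'a \<Rightarrow> 'c::wellorder \<Rightarrow> 'c"
    and Ng' :: "'c \<Rightarrow> 'n set"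
  assumes alg: "alg_hom \<phi>" and graded_alg: "graded_algebra \<phi> Rg" and module: "is_module sm"
    and graded_mod: "graded_module \<phi> Rg sm act' Ng'"
begin

lemma phi_add: "\<phi> (x + y) = \<phi> x + \<phi> y" and phi_one: "\<phi> 1 = 1"
  using alg unfolding alg_hom_def by blast+

lemma phi_zero: "\<phi> 0 = 0"
  using phi_add[of 0 0] by simp

lemma smult_add_right: "sm r (x + y) = sm r x + sm r y"
  and smult_add_left: "sm (r + s) x = sm r x + sm s x"
  and smult_mult: "sm (r * s) x = sm r (sm s x)"
  and smult_one: "sm 1 x = x"
  using module unfolding is_module_def by blast+

lemma smult_zero_right: "sm r 0 = 0"
  using smult_add_right[of r 0 0] by simp

lemma smult_zero_left: "sm 0 x = 0"
  using smult_add_left[of 0 0 x] by simp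

lemma smult_commute: "sm r (sm s x) = sm s (sm r x)"
  by (metis smult_mult mult.commute)

lemma smult_sum_right: "sm r (sum h I) = (\<Sum>i\<in>I. sm r (h i))"
  by (induction I rule: infinite_finite_induct) (auto simp: smult_zero_right smult_add_right)

lemma smult_sum_left: "sm (sum h I) x = (\<Sum>i\<in>I. sm (h i) x)"
  by (induction I rule: infinite_finite_induct) (auto simp: smult_zero_left smult_add_left)

lemma ds_R: "direct_sum_decomp Rg" and ds_N: "direct_sum_decomp Ng'"
  using graded_alg graded_mod unfolding graded_algebra_def graded_module_def by blast+

lemma graded_mult: "r \<in> Rg a \<Longrightarrow> s \<in> Rg a' \<Longrightarrow> r * s \<in> Rg (a + a')"
  and graded_scalar_mult: "r \<in> Rg a \<Longrightarrow> \<phi> k * r \<in> Rg a"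
  using graded_alg unfolding graded_algebra_def by blast+

lemma graded_smult: "r \<in> Rg a \<Longrightarrow> x \<in> Ng' c \<Longrightarrow> sm r x \<in> Ng' (act' a c)"
  and graded_scalar_smult: "x \<in> Ng' c \<Longrightarrow> sm (\<phi> k) x \<in> Ng' c"
  using graded_mod unfolding graded_module_def by blast+

lemma comp_smult_homogeneous:
  assumes "w \<in> Ng' c0"
  shows "comp Ng' c (sm r w) =
    (\<Sum>a\<in>{a. comp Rg a r \<noteq> 0}. if act' a c0 = c then sm (comp Rg a r) w else 0)"
proof -
  let ?A = "{a. comp Rg a r \<noteq> 0}"
  have "sm r w = (\<Sum>a\<in>?A. sm (comp Rg a r) w)"
    by (subst sum_comp[OF ds_R, of r, symmetric]) (rule smult_sum_left)
  then have "comp Ng' c (sm r w) = (\<Sum>a\<in>?A. comp Ng' c (sm (comp Rg a r) w))"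
    by (simp add: comp_sum[OF ds_N])
  also have "\<dots> = (\<Sum>a\<in>?A. if act' a c0 = c then sm (comp Rg a r) w else 0)"
    by (rule sum.cong[OF refl])
      (auto simp: comp_homogeneous[OF ds_N graded_smult[OF comp_in[OF ds_R] assms]])
  finally show ?thesis .
qed

lemma kspan_zero: "0 \<in> kspan \<phi> sm S"
  unfolding kspan_def by (rule CollectI, rule exI[of _ "{}"]) simp

lemma kspan_scalar_mult: "w \<in> S \<Longrightarrow> sm (\<phi> k) w \<in> kspan \<phi> sm S"
  unfolding kspan_def by (rule CollectI, rule exI[of _ "{w}"], rule exI[of _ "\<lambda>_. k"]) simp

lemma kspan_add:
  assumes "u \<in> kspan \<phi> sm S" "v \<in> kspan \<phi> sm S"
  shows "u + v \<in> kspan \<phi> sm S"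
proof -
  obtain F1 k1 where F1: "finite F1" "F1 \<subseteq> S" "u = (\<Sum>w\<in>F1. sm (\<phi> (k1 w)) w)"
    using assms(1) unfolding kspan_def by blast
  obtain F2 k2 where F2: "finite F2" "F2 \<subseteq> S" "v = (\<Sum>w\<in>F2. sm (\<phi> (k2 w)) w)"
    using assms(2) unfolding kspan_def by blast
  define k where "k w = (if w \<in> F1 then k1 w else 0) + (if w \<in> F2 then k2 w else 0)" for w
  have fin: "finite (F1 \<union> F2)" using F1(1) F2(1) by simp
  have "sm (\<phi> (k w)) w =
      (if w \<in> F1 then sm (\<phi> (k1 w)) w else 0) + (if w \<in> F2 then sm (\<phi> (k2 w)) w else 0)" for w
    unfolding k_def phi_add smult_add_left by (simp add: phi_zero smult_zero_left)
  then have "(\<Sum>w\<in>F1 \<union> F2. sm (\<phi> (k w)) w) =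
      (\<Sum>w\<in>F1 \<union> F2. if w \<in> F1 then sm (\<phi> (k1 w)) w else 0) +
      (\<Sum>w\<in>F1 \<union> F2. if w \<in> F2 then sm (\<phi> (k2 w)) w else 0)"
    by (simp add: sum.distrib)
  also have "\<dots> = u + v"
    unfolding F1(3) F2(3) sum.inter_restrict[OF fin, symmetric] by (simp add: Int_absorb1)
  finally have "u + v = (\<Sum>w\<in>F1 \<union> F2. sm (\<phi> (k w)) w)" ..
  moreover have "F1 \<union> F2 \<subseteq> S" using F1(2) F2(2) by simp
  ultimately show ?thesis
    unfolding kspan_def using fin by blast
qed

lemma kspan_sum: "(\<And>i. i \<in> I \<Longrightarrow> h i \<in> kspan \<phi> sm S) \<Longrightarrow> sum h I \<in> kspan \<phi> sm S"
  by (induction I rule: infinite_finite_induct) (auto simp: kspan_zero kspan_add)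

lemma kspan_induct [consumes 1, case_names zero add scalar_mult]:
  assumes "v \<in> kspan \<phi> sm S" "P 0" "\<And>x y. P x \<Longrightarrow> P y \<Longrightarrow> P (x + y)"
    "\<And>k w. w \<in> S \<Longrightarrow> P (sm (\<phi> k) w)"
  shows "P v"
proof -
  obtain F k where F: "finite F" "F \<subseteq> S" "v = (\<Sum>w\<in>F. sm (\<phi> (k w)) w)"
    using assms(1) unfolding kspan_def by blast
  from F(1,2) have "P (\<Sum>w\<in>F. sm (\<phi> (k w)) w)"
  proof (induction F rule: finite_induct)
    case (insert w F)
    then show ?case using assms(3)[OF assms(4)] by simp
  qed (simp add: assms(2))
  then show ?thesis using F(3) by simp
qed

abbreviation W :: "'n set \<Rightarrow> 'c \<Rightarrow> 'n set" where
  "W Y c \<equiv> Wset \<phi> Rg sm Ng' Y c"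

definition Wgens :: "'n set \<Rightarrow> 'c \<Rightarrow> 'n set" where
  "Wgens Y c = {sm r (lf Ng' x) | r x. x \<in> Y \<and> homogeneous Rg r \<and> sm r (lf Ng' x) \<in> Ng' c}"

lemma Wset_eq_kspan: "W Y c = kspan \<phi> sm (Wgens Y c)"
  unfolding Wset_def Wgens_def ..

lemma Wset_zero: "0 \<in> W Y c"
  unfolding Wset_eq_kspan by (rule kspan_zero)

lemma Wset_add: "u \<in> W Y c \<Longrightarrow> v \<in> W Y c \<Longrightarrow> u + v \<in> W Y c"
  unfolding Wset_eq_kspan by (rule kspan_add)

lemma Wset_sum: "(\<And>i. i \<in> I \<Longrightarrow> h i \<in> W Y c) \<Longrightarrow> sum h I \<in> W Y c"
  unfolding Wset_eq_kspan by (rule kspan_sum)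

lemma Wset_generator:
  assumes "y \<in> Y" "r \<in> Rg a" "sm r (lf Ng' y) \<in> Ng' c"
  shows "sm r (lf Ng' y) \<in> W Y c"
proof -
  have "sm r (lf Ng' y) \<in> Wgens Y c"
    using assms unfolding Wgens_def homogeneous_def by blast
  from kspan_scalar_mult[OF this, of 1] show ?thesis
    unfolding Wset_eq_kspan by (simp add: phi_one smult_one)
qed

lemma Wset_smult_homogeneous:
  assumes "r \<in> Rg a" and "v \<in> W Y c"
  shows "sm r v \<in> W Y (act' a c)"
  using assms(2) unfolding Wset_eq_kspan
proof (induction rule: kspan_induct)
  case zero
  then show ?case by (simp add: smult_zero_right kspan_zero)
next
  case (add x y)
  then show ?case by (simp add: smult_add_right kspan_add)
next
  case (scalar_mult k w)
  then obtain r0 y a0 where w: "w = sm r0 (lf Ng' y)" "y \<in> Y" "r0 \<in> Rg a0" "w \<in> Ng' c"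
    unfolding Wgens_def homogeneous_def by blast
  have "sm (r * r0) (lf Ng' y) \<in> Ng' (act' a c)"
    using graded_smult[OF assms(1) w(4)] w(1) by (simp add: smult_mult)
  then have "sm (r * r0) (lf Ng' y) \<in> Wgens Y (act' a c)"
    using graded_mult[OF assms(1) w(3)] w(2) unfolding Wgens_def homogeneous_def by blast
  from kspan_scalar_mult[OF this, of k] show ?case
    unfolding w(1) by (simp add: smult_commute smult_mult)
qed

lemma Wset_sum_list:
  assumes "v \<in> W Y c"
  obtains ps :: "('r \<times> 'n) list"
  where "\<forall>(r, x) \<in> set ps. x \<in> Y \<and> homogeneous Rg r \<and> sm r (lf Ng' x) \<in> Ng' c"
    and "v = sum_list (map (\<lambda>(r, x). sm r (lf Ng' x)) ps)"
proof -
  let ?Q = "\<lambda>ps v. (\<forall>(r, x) \<in> set ps. x \<in> Y \<and> homogeneous Rg r \<and> sm r (lf Ng' x) \<in> Ng' c) \<and>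
    v = sum_list (map (\<lambda>(r, x). sm r (lf Ng' x)) ps)"
  from assms[unfolded Wset_eq_kspan] have "\<exists>ps. ?Q ps v"
  proof (induction rule: kspan_induct)
    case zero
    show ?case by (rule exI[of _ "[]"]) simp
  next
    case (add x y)
    then obtain p1 p2 where "?Q p1 x" "?Q p2 y" by blast
    then show ?case by (intro exI[of _ "p1 @ p2"]) auto
  next
    case (scalar_mult k w)
    then obtain r0 y a0 where w: "w = sm r0 (lf Ng' y)" "y \<in> Y" "r0 \<in> Rg a0" "w \<in> Ng' c"
      unfolding Wgens_def homogeneous_def by blast
    have "sm (\<phi> k * r0) (lf Ng' y) \<in> Ng' c"
      using graded_scalar_smult[OF w(4)] w(1) by (simp add: smult_mult)
    then show ?case
      using graded_scalar_mult[OF w(3)] w(1,2) unfolding homogeneous_def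
      by (intro exI[of _ "[(\<phi> k * r0, y)]"]) (auto simp: smult_mult)
  qed
  then show ?thesis using that by blast
qed

lemma comp_smult_in_Wset:
  assumes "w \<in> Ng' c0" and "\<And>a. act' a c0 = c \<Longrightarrow> w \<in> W Y c0"
  shows "comp Ng' c (sm r w) \<in> W Y c"
  unfolding comp_smult_homogeneous[OF assms(1)]
proof (rule Wset_sum)
  fix a
  show "(if act' a c0 = c then sm (comp Rg a r) w else 0) \<in> W Y c"
  proof (cases "act' a c0 = c")
    case True
    then show ?thesis
      using Wset_smult_homogeneous[OF comp_in[OF ds_R, of a r] assms(2)[OF True]] by simp
  qed (simp add: Wset_zero)
qed

text \<open>The unit of R need not be known to be homogeneous, so lf y = 1 lf y is split along the
  homogeneous components of 1.\<close>
lemma lf_in_Wset: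
  assumes "y \<in> Y"
  shows "lf Ng' y \<in> W Y (gdeg Ng' y)"
proof -
  let ?c0 = "gdeg Ng' y"
  have lf_y: "lf Ng' y \<in> Ng' ?c0" by (rule lf_in[OF ds_N])
  have "lf Ng' y = comp Ng' ?c0 (sm 1 (lf Ng' y))"
    by (simp add: smult_one comp_homogeneous[OF ds_N lf_y])
  also have "\<dots> = (\<Sum>a\<in>{a. comp Rg a 1 \<noteq> 0}.
      if act' a ?c0 = ?c0 then sm (comp Rg a 1) (lf Ng' y) else 0)"
    by (rule comp_smult_homogeneous[OF lf_y])
  also have "\<dots> \<in> W Y ?c0"
  proof (rule Wset_sum)
    fix a
    have "sm (comp Rg a 1) (lf Ng' y) \<in> W Y (act' a ?c0)"
      by (rule Wset_generator[OF assms comp_in[OF ds_R] graded_smult[OF comp_in[OF ds_R] lf_y]])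
    then show "(if act' a ?c0 = ?c0 then sm (comp Rg a 1) (lf Ng' y) else 0) \<in> W Y ?c0"
      by (metis Wset_zero)
  qed
  finally show ?thesis .
qed

lemma comp_lf_in_Wset: "y \<in> Y \<Longrightarrow> comp Ng' c (lf Ng' y) \<in> W Y c"
  using lf_in_Wset by (simp add: comp_homogeneous[OF ds_N lf_in[OF ds_N]] Wset_zero)

lemma comp_lf_in_Wset_Diff:
  assumes "y \<in> X" and "c \<noteq> gdeg Ng' x"
  shows "comp Ng' c (lf Ng' y) \<in> W (X - {x}) c"
  using comp_lf_in_Wset[of y "X - {x}" c] comp_homogeneous[OF ds_N lf_in[OF ds_N], of c x] assms
  by (cases "y = x") (simp_all add: Wset_zero)

text \<open>The elements whose components in all degrees from U lie in W form a submodule: multiplying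
  by a homogeneous element only moves degrees upwards, and U is closed downwards.\<close>
lemma comp_gen_submodule_in_Wset:
  assumes "v \<in> gen_submodule sm Z"
    and down: "\<And>a c. act' a c \<in> U \<Longrightarrow> c \<in> U"
    and gens: "\<And>z c. z \<in> Z \<Longrightarrow> c \<in> U \<Longrightarrow> comp Ng' c z \<in> W Y c"
    and "c \<in> U"
  shows "comp Ng' c v \<in> W Y c"
proof -
  define T where "T = {v. \<forall>c\<in>U. comp Ng' c v \<in> W Y c}"
  have "sm r v \<in> T" if "v \<in> T" for r v
  proof -
    have "comp Ng' c (sm r v) \<in> W Y c" if "c \<in> U" for c
    proof -
      have "comp Ng' c (sm r v) = (\<Sum>c'\<in>{c'. comp Ng' c' v \<noteq> 0}. comp Ng' c (sm r (comp Ng' c' v)))"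
        by (subst sum_comp[OF ds_N, of v, symmetric]) (simp add: smult_sum_right comp_sum[OF ds_N])
      also have "\<dots> \<in> W Y c"
        using \<open>v \<in> T\<close> \<open>c \<in> U\<close> down unfolding T_def
        by (intro Wset_sum comp_smult_in_Wset[OF comp_in[OF ds_N]]) blast
      finally show ?thesis .
    qed
    then show ?thesis unfolding T_def by blast
  qed
  then have "is_submodule sm T"
    unfolding is_submodule_def T_def
    by (simp add: comp_zero[OF ds_N] comp_add[OF ds_N] Wset_zero Wset_add)
  moreover have "Z \<subseteq> T" using gens unfolding T_def by blast
  ultimately have "gen_submodule sm Z \<subseteq> T"
    unfolding gen_submodule_def by blast
  then show ?thesis using assms(1,4) unfolding T_def by blast
qed

lemma reducible_if_comp_in_Wset:
  assumes "comp Ng' c m \<noteq> 0" and "comp Ng' c m \<in> W Y c"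
  shows "\<exists>m'. reduces \<phi> Rg sm Ng' Y m m'"
proof -
  define D where "D = {c. comp Ng' c m \<noteq> 0 \<and> comp Ng' c m \<in> W Y c}"
  have "finite D" unfolding D_def
    by (rule finite_subset[OF _ finite_comp_support[OF ds_N, of m]]) blast
  moreover have "c \<in> D" unfolding D_def using assms by blast
  ultimately have max: "Max D \<in> D" "\<forall>d\<in>D. d \<le> Max D"
    using Max_in[of D] Max_ge[of D] by blast+
  then obtain ps :: "('r \<times> 'n) list" where
    "\<forall>(r, x) \<in> set ps. x \<in> Y \<and> homogeneous Rg r \<and> sm r (lf Ng' x) \<in> Ng' (Max D)"
    "comp Ng' (Max D) m = sum_list (map (\<lambda>(r, x). sm r (lf Ng' x)) ps)"
    using Wset_sum_list unfolding D_def by blast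
  then have "reduces \<phi> Rg sm Ng' Y m (m - sum_list (map (\<lambda>(r, x). sm r x) ps))"
    unfolding reduces_def Let_def D_def[symmetric] using max by blast
  then show ?thesis ..
qed

end

theorem mainTheorem16:
  fixes \<phi> :: "'k::field \<Rightarrow> 'r::comm_ring_1"
    and Rg :: "'a::{comm_monoid_add,wellorder} \<Rightarrow> 'r set"
    and sm :: "'r \<Rightarrow> 'n::ab_group_add \<Rightarrow> 'n"
    and act :: "'a \<Rightarrow> 'b::wellorder \<Rightarrow> 'b"
    and act' :: "'a \<Rightarrow> 'c::wellorder \<Rightarrow> 'c"
    and Ng :: "'b \<Rightarrow> 'n set"
    and Ng' :: "'c \<Rightarrow> 'n set"
    and M X :: "'n set"
  assumes "graded_monoid_ok TYPE('a)"
    and "alg_hom \<phi>"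
    and "graded_algebra \<phi> Rg"
    and "noetherian_ring TYPE('r)"
    and "monoid_action act"
    and "monoid_action act'"
    and "is_module sm"
    and "noetherian_module sm"
    and "graded_module \<phi> Rg sm act Ng"
    and "graded_module \<phi> Rg sm act' Ng'"
    and "refines act act' Ng Ng'"
    and "is_submodule sm M"
    and "graded_submodule Ng M"
    and "reduced_macaulay_basis \<phi> Rg sm Ng' M X"
  shows "\<forall>x\<in>X. homogeneous Ng x"
proof
  interpret graded_reduction \<phi> Rg sm act' Ng' using assms by unfold_locales
  have ds: "direct_sum_decomp Ng" using assms(9) unfolding graded_module_def by blast
  obtain g :: "'c \<Rightarrow> 'b" where g: "mono g" "\<And>a c. g (act' a c) = act a (g c)"
    "\<And>b. Ng b = {x. \<exists>S f. finite S \<and> S \<subseteq> g -` {b} \<and> (\<forall>c\<in>S. f c \<in> Ng' c) \<and> x = sum f S}"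
    using assms(11) unfolding refines_def by blast
  have X: "X \<subseteq> M"
    and lf_gen: "gen_submodule sm {lf Ng' p | p. p \<in> M \<and> p \<noteq> 0} = gen_submodule sm (lf Ng' ` X)"
    and reduced: "\<And>y. y \<in> X \<Longrightarrow> \<nexists>m'. reduces \<phi> Rg sm Ng' (X - {y}) y m'"
    using assms(14) unfolding reduced_macaulay_basis_def macaulay_basis_def by blast+
  fix x assume "x \<in> X"
  show "homogeneous Ng x"
  proof (rule ccontr)
    assume "\<not> homogeneous Ng x"
    then obtain b where b: "comp Ng b x \<noteq> 0"
      "g (gdeg Ng' (comp Ng b x)) < g (gdeg Ng' x)"
      "comp Ng' (gdeg Ng' (comp Ng b x)) x = lf Ng' (comp Ng b x)"
      using nonhomogeneous_lower_component[OF ds ds_N g(3) g(1)] by blast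
    define p where "p = comp Ng b x"
    have "p \<in> M"
      using comp_in_graded_submodule[OF ds assms(13)] assms(12) X \<open>x \<in> X\<close>
      unfolding p_def is_submodule_def by blast
    then have "lf Ng' p \<in> gen_submodule sm (lf Ng' ` X)"
      using b(1) lf_gen unfolding p_def gen_submodule_def by blast
    then have "comp Ng' (gdeg Ng' p) (lf Ng' p) \<in> W (X - {x}) (gdeg Ng' p)"
      by (rule comp_gen_submodule_in_Wset[where U = "{c. g c < g (gdeg Ng' x)}"])
        (auto simp: p_def b(2) intro: comp_lf_in_Wset_Diff
          refining_map_less_if_act_less[where g = g and act' = act', OF assms(1,5) g(2)])
    moreover have "comp Ng' (gdeg Ng' p) (lf Ng' p) = comp Ng' (gdeg Ng' p) x"
      using b(3) comp_homogeneous[OF ds_N lf_in[OF ds_N]] unfolding p_def by simp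
    ultimately show False
      using reducible_if_comp_in_Wset reduced[OF \<open>x \<in> X\<close>] lf_nonzero[OF ds_N b(1)] b(3)
      unfolding p_def by metis
  qed
qed

end
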